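(* Let $M\ge1$, let $\Delta_M=\{\mathbf d\in[0,1]^M:\sum_i d_i=1\}$, and for each $j\ge0$ let $C_{vj}:\Delta_M\to[0,1]$ be Lipschitz continuous functions with $C_{vj}(\mathbf d)\ge C_{v(j+1)}(\mathbf d)$ for all $j,\mathbf d$. For $\epsilon_v>0$ let $J_{\epsilon_v}(\mathbf d)$ be the smallest integer $j$ with $C_{vj}(\mathbf d)>C_{v(j+1)}(\mathbf d)+\epsilon_v$. For $p\in[0,1]$, $\mathbf d\in\Delta_M$ and integer $n\ge0$ let $q_v(p\mathbf d,n)=\sum_{j=0}^{n}\binom{n}{j}p^j(1-p)^{n-j}C_{vj}(\mathbf d)$, extended to real $\hat K\ge0$ by $q_v(p\mathbf d,\hat K)=(\lfloor\hat K\rfloor+1-\hat K)q_v(p\mathbf d,\lfloor\hat K\rfloor)+(\hat K-\lfloor\hat K\rfloor)q_v(p\mathbf d,\lfloor\hat K\rfloor+1)$. Let $\hat K_0<\hat K_1<\dots<\hat K_L$ be integers, and suppose values $p(\hat K_i)\in(0,1)$ and $\mathbf d(\hat K_i)\in\Delta_M$ are given; set $\mathbf p(\hat K_i)=p(\hat K_i)\mathbf d(\hat K_i)$ and $q_v^*(\hat K_i)=q_v(\mathbf p(\hat K_i),\hat K_i)$. For $i=1,\dots,L$ and $0\le\lambda<1$ define $\hat K_{i\lambda}=(1-\lambda)\hat K_{i-1}+\lambda\hat K_i$, $\mathbf d_{i\lambda}=(1-\lambda)\mathbf d(\hat K_{i-1})+\lambda\mathbf d(\hat K_i)$, $q^*_{vi\lambda}=(1-\lambda)q_v^*(\hat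 K_{i-1})+\lambda q_v^*(\hat K_i)$. Assume (Pinpoints Condition): (1) there is $\epsilon_q>0$ with $q_v^*(\hat K_{i-1})-q_v^*(\hat K_i)\ge\epsilon_q$ for $i=1,\dots,L$; (2) there is $\epsilon_v>0$ with $\hat K_{i\lambda}>J_{\epsilon_v}(\mathbf d_{i\lambda})$ for all $i=1,\dots,L$ and $0\le\lambda<1$; (3) there are $0<\underline p<\overline p<1$ with $\underline p\le p(\hat K_i)\le\overline p$ for $i=1,\dots,L$; (4) $q_v(\overline p\,\mathbf d_{i\lambda},\hat K_{i\lambda})\le q^*_{vi\lambda}\le q_v(\underline p\,\mathbf d_{i\lambda},\hat K_{i\lambda})$ for all $i=1,\dots,L$ and $0\le\lambda<1$. Complete the function by the Interpolation Approach: for $\hat K=\hat K_{i\lambda}$ ($i=1,\dots,L$, $0\le\lambda<1$), choose $p(\hat K)\in[\underline p,\overline p]$ with $q_v(p(\hat K)\mathbf d_{i\lambda},\hat K_{i\lambda})=q^*_{vi\lambda}$, and set $\mathbf d(\hat K)=\mathbf d_{i\lambda}$, $\mathbf p(\hat K)=p(\hat K)\mathbf d_{i\lambda}$, and $q_v^*(\hat K)=(\lfloor\hat K\rfloor+1-\hat K)q_v(\mathbf p(\hat K),\lfloor\hat K\rfloor)+(\hat K-\lfloor\hat K\rfloor)q_v(\mathbf p(\hat K),\lfloor\hat K\rfloor+1)$. Then on $[\hat K_0,\hat K_L]$ the following (Monotonicity and Gradient Condition) hold: (a) $\mathbf p(\hat K)$ is Lipschitz continuous: there is $K_g>0$ with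 $\|\mathbf p(\hat K_a)-\mathbf p(\hat K_b)\|\le K_g|\hat K_a-\hat K_b|$ for all $\hat K_a,\hat K_b\in[\hat K_0,\hat K_L]$; (b) $q_v^*(\hat K)$ is continuous and strictly decreasing, and there is $\epsilon'>0$ with $|q_v^*(\hat K_a)-q_v^*(\hat K_b)|\ge\epsilon'|\hat K_a-\hat K_b|$ for all $\hat K_a,\hat K_b\in[\hat K_0,\hat K_L]$; (c) $\hat K>J_{\epsilon_v}(\mathbf d(\hat K))$ for all $\hat K\in[\hat K_0,\hat K_L)$; (d) $\underline p\le p(\hat K)\le\overline p$ for all $\hat K\in[\hat K_0,\hat K_L]$.
   Context: Setting: each of several homogeneous users has $M$ transmission options plus idling; a user's transmission probability vector is $\mathbf p=p\mathbf d$, where $p$ is the probability of transmitting and $\mathbf d\in\Delta_M$ gives the conditional probabilities of the options. $C_{vj}(\mathbf d)$ is the success probability of a virtual packet transmitted in parallel with $j$ real packets when all users use direction $\mathbf d$, and $q_v(p\mathbf d,n)$ is the virtual packet success probability when $n$ users each use $p\mathbf d$. The Lipschitz continuity of each $C_{vj}(\cdot)$ in $\mathbf d$ is a standing regularity assumption used implicitly. $\hat K$ plays the role of a user-number estimate and $q_v^*$ is the "theoretical channel contention measure"; the integers $\hat K_i$ are called pinpoints. *)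

theory Defs
  imports "HOL-Analysis.Analysis"
begin

text \<open>The probability simplex Delta_M; the dimension M is the cardinality of the finite index type 'm.\<close>
definition simplexM :: "(real ^ 'm) set" where
  "simplexM = {d. (\<forall>i. 0 \<le> d $ i \<and> d $ i \<le> 1) \<and> (\<Sum>i\<in>UNIV. d $ i) = 1}"

text \<open>J_eps(d): smallest j with C_j(d) > C_(j+1)(d) + eps (meaningful when such j exists).\<close>
definition J_exists :: "(nat \<Rightarrow> real ^ 'm \<Rightarrow> real) \<Rightarrow> real \<Rightarrow> real ^ 'm \<Rightarrow> bool" where
  "J_exists C eps d = (\<exists>j. C j d > C (Suc j) d + eps)"

definition Jeps :: "(nat \<Rightarrow> real ^ 'm \<Rightarrow> real) \<Rightarrow> real \<Rightarrow> real ^ 'm \<Rightarrow> nat" where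
  "Jeps C eps d = (LEAST j. C j d > C (Suc j) d + eps)"

definition qv :: "(nat \<Rightarrow> real ^ 'm \<Rightarrow> real) \<Rightarrow> real \<Rightarrow> real ^ 'm \<Rightarrow> nat \<Rightarrow> real" where
  "qv C p d n = (\<Sum>j=0..n. real (n choose j) * p ^ j * (1 - p) ^ (n - j) * C j d)"

definition qvr :: "(nat \<Rightarrow> real ^ 'm \<Rightarrow> real) \<Rightarrow> real \<Rightarrow> real ^ 'm \<Rightarrow> real \<Rightarrow> real" where
  "qvr C p d K = (of_int \<lfloor>K\<rfloor> + 1 - K) * qv C p d (nat \<lfloor>K\<rfloor>)
                 + (K - of_int \<lfloor>K\<rfloor>) * qv C p d (nat \<lfloor>K\<rfloor> + 1)"

definition Kil :: "(nat \<Rightarrow> nat) \<Rightarrow> nat \<Rightarrow> real \<Rightarrow> real" where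
  "Kil Kp i l = (1 - l) * real (Kp (i - 1)) + l * real (Kp i)"

definition dil :: "(nat \<Rightarrow> real ^ 'm) \<Rightarrow> nat \<Rightarrow> real \<Rightarrow> real ^ 'm" where
  "dil dd i l = (1 - l) *\<^sub>R dd (i - 1) + l *\<^sub>R dd i"

definition qstar_pin :: "(nat \<Rightarrow> real ^ 'm \<Rightarrow> real) \<Rightarrow> (nat \<Rightarrow> nat) \<Rightarrow> (nat \<Rightarrow> real) \<Rightarrow> (nat \<Rightarrow> real ^ 'm) \<Rightarrow> nat \<Rightarrow> real" where
  "qstar_pin C Kp pp dd i = qvr C (pp i) (dd i) (real (Kp i))"

definition qil :: "(nat \<Rightarrow> real ^ 'm \<Rightarrow> real) \<Rightarrow> (nat \<Rightarrow> nat) \<Rightarrow> (nat \<Rightarrow> real) \<Rightarrow> (nat \<Rightarrow> real ^ 'm) \<Rightarrow> nat \<Rightarrow> real \<Rightarrow> real" where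
  "qil C Kp pp dd i l = (1 - l) * qstar_pin C Kp pp dd (i - 1) + l * qstar_pin C Kp pp dd i"

end

theory Submission
  imports Defs
begin

text \<open>Between consecutive pinpoints both the direction \<open>d\<close> and the target \<open>q\<^sub>v\<^sup>*\<close> are affine
  in \<open>K\<close>, so \<open>d\<close> is 2-Lipschitz and \<open>q\<^sub>v\<^sup>*\<close> has slope between \<open>-1\<close> and
  \<open>-\<epsilon>\<^sub>q / (K\<^sub>L - K\<^sub>0)\<close>.  To control \<open>p\<close>, view \<open>q\<^sub>v(p d, n)\<close> as the Bernstein polynomial
  in \<open>p\<close> with the antitone coefficients \<open>C\<^sub>j(d)\<close>: raising \<open>p\<close> from \<open>p\<^sub>1\<close> to \<open>p\<^sub>2\<close> lowers it
  by at least \<open>(p\<^sub>2 - p\<^sub>1) m\<^sup>n (C\<^sub>0(d) - C\<^sub>n(d))\<close>, where \<open>m = min p\<^sub>l\<^sub>o (1 - p\<^sub>h\<^sub>i)\<close>.  Condition (2)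
  and the Lipschitz continuity of the \<open>C\<^sub>j\<close> keep the interpolated gap \<open>C\<^sub>0 - C\<^sub>K\<close> uniformly
  positive, so comparing \<open>q\<^sub>v\<close> at two nearby estimates bounds \<open>|p(a) - p(b)|\<close> by a multiple of
  \<open>|a - b|\<close>.\<close>

section \<open>Bernstein polynomials\<close>

definition bernstein_poly :: "nat \<Rightarrow> (nat \<Rightarrow> real) \<Rightarrow> real \<Rightarrow> real" where
  "bernstein_poly n c p = (\<Sum>j\<le>n. c j * Bernstein n j p)"

lemma bernstein_poly_const [simp]: "bernstein_poly n (\<lambda>_. a) p = a"
  unfolding bernstein_poly_def by (simp flip: sum_distrib_left)

lemma bernstein_poly_diff:
  "bernstein_poly n (\<lambda>j. f j - g j) p = bernstein_poly n f p - bernstein_poly n g p"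
  unfolding bernstein_poly_def by (simp add: sum_subtractf left_diff_distrib)

lemma bernstein_poly_mono:
  assumes "0 \<le> p" "p \<le> 1" "\<And>j. j \<le> n \<Longrightarrow> f j \<le> g j"
  shows "bernstein_poly n f p \<le> bernstein_poly n g p"
  unfolding bernstein_poly_def
  using assms by (intro sum_mono mult_right_mono) (auto intro: Bernstein_nonneg)

lemma bernstein_poly_abs_le:
  assumes "0 \<le> p" "p \<le> 1" "\<And>j. j \<le> n \<Longrightarrow> \<bar>f j\<bar> \<le> M"
  shows "\<bar>bernstein_poly n f p\<bar> \<le> M"
proof -
  have "- M \<le> f j \<and> f j \<le> M" if "j \<le> n" for j
    using assms(3)[OF that] by linarith
  then show ?thesis
    using bernstein_poly_mono[of p n f "\<lambda>_. M"] bernstein_poly_mono[of p n "\<lambda>_. - M" f] assms(1,2)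
    by (simp add: abs_le_iff)
qed

lemma bernstein_poly_Suc:
  "bernstein_poly (Suc n) c p = (1 - p) * bernstein_poly n c p + p * bernstein_poly n (\<lambda>j. c (Suc j)) p"
proof -
  define Y where "Y i = c i * (real (n choose i) * p ^ i * (1 - p) ^ (Suc n - i))" for i
  have Y: "(\<Sum>i\<le>Suc n. Y i) = (1 - p) * bernstein_poly n c p"
  proof -
    have "(\<Sum>i\<le>Suc n. Y i) = (\<Sum>i\<le>n. Y i)" by (simp add: Y_def)
    also have "\<dots> = (\<Sum>i\<le>n. (1 - p) * (c i * Bernstein n i p))"
      by (rule sum.cong) (auto simp: Y_def Bernstein_def Suc_diff_le)
    finally show ?thesis by (simp add: bernstein_poly_def sum_distrib_left)
  qed
  have "bernstein_poly (Suc n) c p = c 0 * (1 - p) ^ Suc n +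
      (\<Sum>i\<le>n. c (Suc i) * (real (Suc n choose Suc i) * p ^ Suc i * (1 - p) ^ (n - i)))"
    unfolding bernstein_poly_def Bernstein_def by (subst sum.atMost_Suc_shift) simp
  also have "(\<Sum>i\<le>n. c (Suc i) * (real (Suc n choose Suc i) * p ^ Suc i * (1 - p) ^ (n - i)))
     = p * bernstein_poly n (\<lambda>j. c (Suc j)) p + (\<Sum>i\<le>n. Y (Suc i))"
    by (simp add: bernstein_poly_def Bernstein_def Y_def sum_distrib_left
        sum.distrib[symmetric] algebra_simps)
  finally show ?thesis
    using Y sum.atMost_Suc_shift[of Y "Suc n"] by (simp add: Y_def)
qed

lemma bernstein_poly_Suc_diff:
  "bernstein_poly (Suc n) c p\<^sub>1 - bernstein_poly (Suc n) c p\<^sub>2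
   = (1 - p\<^sub>1) * (bernstein_poly n c p\<^sub>1 - bernstein_poly n c p\<^sub>2)
     + p\<^sub>1 * (bernstein_poly n (\<lambda>j. c (Suc j)) p\<^sub>1 - bernstein_poly n (\<lambda>j. c (Suc j)) p\<^sub>2)
     + (p\<^sub>2 - p\<^sub>1) * bernstein_poly n (\<lambda>j. c j - c (Suc j)) p\<^sub>2"
  by (simp add: bernstein_poly_Suc bernstein_poly_diff algebra_simps)

lemma bernstein_poly_antimono_param:
  assumes "\<And>j. c (Suc j) \<le> c j" "0 \<le> p\<^sub>1" "p\<^sub>1 \<le> p\<^sub>2" "p\<^sub>2 \<le> 1"
  shows "bernstein_poly n c p\<^sub>2 \<le> bernstein_poly n c p\<^sub>1"
  using assms(1)
proof (induction n arbitrary: c)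
  case 0
  then show ?case by (simp add: bernstein_poly_def Bernstein_def)
next
  case (Suc n)
  have "0 \<le> bernstein_poly n (\<lambda>j. c j - c (Suc j)) p\<^sub>2"
    using bernstein_poly_mono[of p\<^sub>2 n "\<lambda>_. 0"] Suc.prems assms(2-4) by simp
  then have "0 \<le> bernstein_poly (Suc n) c p\<^sub>1 - bernstein_poly (Suc n) c p\<^sub>2"
    unfolding bernstein_poly_Suc_diff
    using Suc.IH[of c] Suc.IH[of "\<lambda>j. c (Suc j)"] Suc.prems assms(2-4)
    by (intro add_nonneg_nonneg mult_nonneg_nonneg) auto
  then show ?case by simp
qed

lemma Bernstein_ge_power:
  assumes "0 \<le> m" "m \<le> p" "m \<le> 1 - p" "k \<le> n"
  shows "m ^ n \<le> Bernstein n k p"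
proof -
  have "m ^ n = m ^ k * m ^ (n - k)"
    using assms(4) by (simp flip: power_add)
  also have "\<dots> \<le> p ^ k * (1 - p) ^ (n - k)"
    using assms by (intro mult_mono power_mono) auto
  also have "\<dots> \<le> real (n choose k) * (p ^ k * (1 - p) ^ (n - k))"
    using mult_right_mono[of 1 "real (n choose k)" "p ^ k * (1 - p) ^ (n - k)"] assms
    by (simp add: Suc_leI)
  finally show ?thesis by (simp add: Bernstein_def mult.assoc)
qed

lemma bernstein_poly_gap:
  assumes "\<And>j. c (Suc j) \<le> c j" "0 \<le> m" "m \<le> p\<^sub>1" "p\<^sub>1 \<le> p\<^sub>2" "p\<^sub>2 \<le> 1 - m"
  shows "(p\<^sub>2 - p\<^sub>1) * m ^ n * (c 0 - c n) \<le> bernstein_poly n c p\<^sub>1 - bernstein_poly n c p\<^sub>2"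
proof (cases n)
  case 0
  then show ?thesis by (simp add: bernstein_poly_def Bernstein_def)
next
  case (Suc k)
  have "m ^ k * (c 0 - c (Suc k)) = (\<Sum>j\<le>k. (c j - c (Suc j)) * m ^ k)"
    by (simp add: sum_telescope flip: sum_distrib_right)
  also have "\<dots> \<le> bernstein_poly k (\<lambda>j. c j - c (Suc j)) p\<^sub>2"
    unfolding bernstein_poly_def using assms
    by (intro sum_mono mult_left_mono Bernstein_ge_power) auto
  finally have forward_diff: "m ^ k * (c 0 - c (Suc k)) \<le> bernstein_poly k (\<lambda>j. c j - c (Suc j)) p\<^sub>2" .
  have "m ^ Suc k * (c 0 - c (Suc k)) \<le> m ^ k * (c 0 - c (Suc k))"
    using assms lift_Suc_antimono_le[of c 0 "Suc k"] by (intro mult_right_mono power_decreasing) auto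
  then have "(p\<^sub>2 - p\<^sub>1) * m ^ n * (c 0 - c n)
      \<le> (p\<^sub>2 - p\<^sub>1) * bernstein_poly k (\<lambda>j. c j - c (Suc j)) p\<^sub>2"
    using forward_diff assms Suc by (simp add: mult.assoc mult_left_mono)
  also have "\<dots> \<le> bernstein_poly n c p\<^sub>1 - bernstein_poly n c p\<^sub>2"
    unfolding Suc bernstein_poly_Suc_diff
    using bernstein_poly_antimono_param[of c p\<^sub>1 p\<^sub>2 k]
      bernstein_poly_antimono_param[of "\<lambda>j. c (Suc j)" p\<^sub>1 p\<^sub>2 k] assms
    by (simp add: add_nonneg_nonneg)
  finally show ?thesis .
qed

section \<open>Partitions and piecewise linear interpolation\<close>

lemma partition_chain:
  fixes x :: "nat \<Rightarrow> real"
  assumes trans: "\<And>a b c. a \<le> b \<Longrightarrow> b \<le> c \<Longrightarrow> R a b \<Longrightarrow> R b c \<Longrightarrow> R a c"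
    and refl: "\<And>a. R a a"
    and segment: "\<And>i a b. i < L \<Longrightarrow> x i \<le> a \<Longrightarrow> a \<le> b \<Longrightarrow> b \<le> x (Suc i) \<Longrightarrow> R a b"
    and "x 0 \<le> a" "a \<le> b" "b \<le> x L"
  shows "R a b"
proof -
  have "R a b'" if "k \<le> L" "a \<le> b'" "b' \<le> x k" for k b'
    using that
  proof (induction k arbitrary: b')
    case 0
    then have "a = b'" using assms(4) by linarith
    then show ?case using refl by simp
  next
    case (Suc k)
    consider "b' \<le> x k" | "x k \<le> a" | "a < x k" "x k < b'" by linarith
    then show ?case
    proof cases
      case 1
      then show ?thesis using Suc by simp
    next
      case 2
      then show ?thesis using Suc.prems segment[of k a b'] by simp
    next
      case 3
      then have "R a (x k)" "R (x k) b'"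
        using Suc.IH[of "x k"] Suc.prems segment[of k "x k" b'] by simp_all
      then show ?thesis using trans[of a "x k" b'] 3 by simp
    qed
  qed
  then show ?thesis using assms(5,6) by blast
qed

lemma partition_segment_exists:
  fixes x :: "nat \<Rightarrow> real"
  assumes "x 0 \<le> t" "t < x L"
  obtains i where "i < L" "x i \<le> t" "t < x (Suc i)"
  using assms(2)
proof (induction L)
  case (Suc L)
  show ?case
  proof (cases "t < x L")
    case False
    then show ?thesis using Suc.prems(1)[of L] Suc.prems(2) by simp
  qed (meson Suc.IH Suc.prems(1) less_SucI)
qed (use assms in simp)

definition lin_interp :: "(nat \<Rightarrow> real) \<Rightarrow> real \<Rightarrow> real" where
  "lin_interp f x = (1 - frac x) * f (nat \<lfloor>x\<rfloor>) + frac x * f (Suc (nat \<lfloor>x\<rfloor>))"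

lemma lin_interp_const [simp]: "lin_interp (\<lambda>_. a) x = a"
  by (simp add: lin_interp_def algebra_simps)

lemma lin_interp_diff: "lin_interp (\<lambda>j. f j - g j) x = lin_interp f x - lin_interp g x"
  by (simp add: lin_interp_def algebra_simps)

lemma lin_interp_cmult: "lin_interp (\<lambda>j. a * f j) x = a * lin_interp f x"
  by (simp add: lin_interp_def algebra_simps)

lemma lin_interp_mono:
  assumes "\<And>j. j \<le> Suc (nat \<lfloor>x\<rfloor>) \<Longrightarrow> f j \<le> g j"
  shows "lin_interp f x \<le> lin_interp g x"
  unfolding lin_interp_def using assms frac_lt_1[of x]
  by (intro add_mono mult_left_mono) auto

lemma lin_interp_abs_le:
  assumes "\<And>j. j \<le> Suc (nat \<lfloor>x\<rfloor>) \<Longrightarrow> \<bar>f j\<bar> \<le> M"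
  shows "\<bar>lin_interp f x\<bar> \<le> M"
proof -
  have "- M \<le> f j \<and> f j \<le> M" if "j \<le> Suc (nat \<lfloor>x\<rfloor>)" for j
    using assms[OF that] by linarith
  then show ?thesis
    using lin_interp_mono[of x f "\<lambda>_. M"] lin_interp_mono[of x "\<lambda>_. - M" f]
    by (simp add: abs_le_iff)
qed

lemma lin_interp_unit_segment:
  assumes "real k \<le> x" "x \<le> real (Suc k)"
  shows "lin_interp f x = f k + (x - real k) * (f (Suc k) - f k)"
proof (cases "x = real (Suc k)")
  case False
  then have "\<lfloor>x\<rfloor> = int k" using assms by (intro floor_unique) auto
  then show ?thesis by (simp add: lin_interp_def frac_def algebra_simps)
next
  case True
  then have floor_x: "\<lfloor>x\<rfloor> = int (Suc k)" by (simp only: floor_of_nat)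
  have frac_x: "frac x = 0" unfolding frac_def floor_x using True by simp
  have "nat \<lfloor>x\<rfloor> = Suc k" unfolding floor_x by simp
  then show ?thesis unfolding lin_interp_def frac_x using True by simp
qed

lemma lin_interp_lipschitz:
  assumes "\<And>j. \<bar>f (Suc j) - f j\<bar> \<le> M" "0 \<le> a" "a \<le> b"
  shows "\<bar>lin_interp f b - lin_interp f a\<bar> \<le> M * (b - a)"
proof (rule partition_chain[where x = real and L = "nat \<lceil>b\<rceil>"
      and R = "\<lambda>a b. \<bar>lin_interp f b - lin_interp f a\<bar> \<le> M * (b - a)"])
  fix a b c :: real
  assume "\<bar>lin_interp f b - lin_interp f a\<bar> \<le> M * (b - a)"
    "\<bar>lin_interp f c - lin_interp f b\<bar> \<le> M * (c - b)"
  then show "\<bar>lin_interp f c - lin_interp f a\<bar> \<le> M * (c - a)"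
    by (simp add: algebra_simps abs_diff_le_iff)
next
  fix i a b
  assume segment: "real i \<le> a" "a \<le> b" "b \<le> real (Suc i)"
  have "lin_interp f b - lin_interp f a = (b - a) * (f (Suc i) - f i)"
    using lin_interp_unit_segment[of i a f] lin_interp_unit_segment[of i b f] segment
    by (simp add: algebra_simps)
  moreover have "(b - a) * \<bar>f (Suc i) - f i\<bar> \<le> (b - a) * M"
    using assms(1)[of i] segment by (intro mult_left_mono) auto
  ultimately show "\<bar>lin_interp f b - lin_interp f a\<bar> \<le> M * (b - a)"
    using segment by (simp add: abs_mult mult.commute)
qed (use assms in \<open>auto simp: real_nat_ceiling_ge\<close>)

section \<open>Success probabilities on the simplex\<close>

lemma qv_eq_bernstein_poly: "qv C p d n = bernstein_poly n (\<lambda>j. C j d) p"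
  unfolding qv_def bernstein_poly_def Bernstein_def by (simp add: atLeast0AtMost mult_ac)

lemma qvr_eq_lin_interp: "qvr C p d K = lin_interp (qv C p d) K"
  unfolding qvr_def lin_interp_def frac_def by (simp add: algebra_simps)

lemma qv_range:
  assumes "\<And>j. 0 \<le> C j d \<and> C j d \<le> 1" "0 \<le> p" "p \<le> 1"
  shows "0 \<le> qv C p d n \<and> qv C p d n \<le> 1"
  using bernstein_poly_mono[of p n "\<lambda>_. 0" "\<lambda>j. C j d"]
    bernstein_poly_mono[of p n "\<lambda>j. C j d" "\<lambda>_. 1"] assms
  by (simp add: qv_eq_bernstein_poly)

lemma qvr_range:
  assumes "\<And>j. 0 \<le> C j d \<and> C j d \<le> 1" "0 \<le> p" "p \<le> 1"
  shows "0 \<le> qvr C p d K \<and> qvr C p d K \<le> 1"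
  using lin_interp_mono[of K "\<lambda>_. 0" "qv C p d"] lin_interp_mono[of K "qv C p d" "\<lambda>_. 1"]
    qv_range[of C d p, OF assms]
  by (simp add: qvr_eq_lin_interp)

lemma qvr_lipschitz_d:
  assumes "0 \<le> p" "p \<le> 1" "\<And>j. j \<le> Suc (nat \<lfloor>K\<rfloor>) \<Longrightarrow> B-lipschitz_on S (C j)"
    "d\<^sub>1 \<in> S" "d\<^sub>2 \<in> S"
  shows "\<bar>qvr C p d\<^sub>1 K - qvr C p d\<^sub>2 K\<bar> \<le> B * norm (d\<^sub>1 - d\<^sub>2)"
proof -
  have "\<bar>C j d\<^sub>1 - C j d\<^sub>2\<bar> \<le> B * norm (d\<^sub>1 - d\<^sub>2)" if "j \<le> Suc (nat \<lfloor>K\<rfloor>)" for j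
    using lipschitz_onD[OF assms(3)[OF that] assms(4,5)] by (simp add: dist_norm dist_real_def)
  then have "\<bar>lin_interp (\<lambda>n. bernstein_poly n (\<lambda>j. C j d\<^sub>1 - C j d\<^sub>2) p) K\<bar> \<le> B * norm (d\<^sub>1 - d\<^sub>2)"
    using assms(1,2) by (intro lin_interp_abs_le bernstein_poly_abs_le) auto
  then show ?thesis
    unfolding qvr_eq_lin_interp qv_eq_bernstein_poly bernstein_poly_diff lin_interp_diff .
qed

lemma qvr_lipschitz_K:
  assumes "\<And>j. 0 \<le> C j d \<and> C j d \<le> 1" "0 \<le> p" "p \<le> 1" "0 \<le> a" "a \<le> b"
  shows "\<bar>qvr C p d b - qvr C p d a\<bar> \<le> b - a"
proof -
  have "\<bar>qv C p d (Suc j) - qv C p d j\<bar> \<le> 1" for j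
    using qv_range[of C d p, OF assms(1-3)] by (smt (verit))
  then show ?thesis
    using lin_interp_lipschitz[of "qv C p d" 1 a b] assms(4,5) by (simp add: qvr_eq_lin_interp)
qed

lemma qvr_gap:
  assumes "\<And>j. C (Suc j) d \<le> C j d" "0 \<le> m" "m \<le> p\<^sub>1" "p\<^sub>1 \<le> p\<^sub>2" "p\<^sub>2 \<le> 1 - m"
    "Suc (nat \<lfloor>K\<rfloor>) \<le> M"
  shows "(p\<^sub>2 - p\<^sub>1) * m ^ M * lin_interp (\<lambda>j. C 0 d - C j d) K \<le> qvr C p\<^sub>1 d K - qvr C p\<^sub>2 d K"
proof -
  have "(p\<^sub>2 - p\<^sub>1) * m ^ M * (C 0 d - C n d) \<le> qv C p\<^sub>1 d n - qv C p\<^sub>2 d n" if "n \<le> M" for n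
  proof -
    have "m ^ M \<le> m ^ n" using assms that by (intro power_decreasing) auto
    then have "(p\<^sub>2 - p\<^sub>1) * m ^ M * (C 0 d - C n d) \<le> (p\<^sub>2 - p\<^sub>1) * m ^ n * (C 0 d - C n d)"
      using assms lift_Suc_antimono_le[of "\<lambda>j. C j d" 0 n]
      by (intro mult_right_mono mult_left_mono) auto
    also have "\<dots> \<le> qv C p\<^sub>1 d n - qv C p\<^sub>2 d n"
      unfolding qv_eq_bernstein_poly using assms by (intro bernstein_poly_gap) auto
    finally show ?thesis .
  qed
  then have "lin_interp (\<lambda>j. (p\<^sub>2 - p\<^sub>1) * m ^ M * (C 0 d - C j d)) K
      \<le> lin_interp (\<lambda>j. qv C p\<^sub>1 d j - qv C p\<^sub>2 d j) K"
    using assms(6) by (intro lin_interp_mono) auto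
  then show ?thesis by (simp add: lin_interp_cmult lin_interp_diff qvr_eq_lin_interp)
qed

lemma Jeps_gap:
  assumes "J_exists C eps d" "\<And>j. C (Suc j) d \<le> C j d" "Jeps C eps d < n"
  shows "eps < C 0 d - C n d"
proof -
  define J where "J = Jeps C eps d"
  have "C (Suc J) d + eps < C J d"
    using assms(1) unfolding J_def J_exists_def Jeps_def by (rule LeastI_ex)
  moreover have "C J d \<le> C 0 d" "C n d \<le> C (Suc J) d"
    using lift_Suc_antimono_le[of "\<lambda>j. C j d"] assms(2,3) unfolding J_def by auto
  ultimately show ?thesis by linarith
qed

lemma uniform_lipschitz_on_initial_segment:
  fixes n :: nat
  assumes "\<And>j. \<exists>B. B-lipschitz_on S (f j)"
  obtains B where "0 \<le> B" "\<And>j. j \<le> n \<Longrightarrow> B-lipschitz_on S (f j)"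
proof -
  obtain Bf where Bf: "\<And>j. (Bf j)-lipschitz_on S (f j)" using assms by metis
  have "Bf j \<le> (\<Sum>i\<le>n. Bf i)" if "j \<le> n" for j
    using that lipschitz_on_nonneg[OF Bf] by (intro member_le_sum) auto
  then show ?thesis
    using that[of "\<Sum>i\<le>n. Bf i"] Bf lipschitz_on_nonneg lipschitz_on_le
    by (metis atMost_iff sum_nonneg)
qed

lemma simplexM_convex:
  assumes "x \<in> simplexM" "y \<in> simplexM" "0 \<le> l" "l \<le> 1"
  shows "(1 - l) *\<^sub>R x + l *\<^sub>R y \<in> simplexM"
proof -
  have "0 \<le> (1 - l) * x $ i + l * y $ i \<and> (1 - l) * x $ i + l * y $ i \<le> 1" for i
    using assms convex_bound_le[of "x $ i" 1 "y $ i" "1 - l" l] by (auto simp: simplexM_def)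
  moreover have "(\<Sum>i\<in>UNIV. (1 - l) * x $ i + l * y $ i) = 1"
    using assms by (simp add: simplexM_def sum.distrib flip: sum_distrib_left)
  ultimately show ?thesis by (simp add: simplexM_def)
qed

lemma simplexM_norm_le_1:
  assumes "d \<in> simplexM"
  shows "norm d \<le> 1"
proof -
  have "norm d \<le> (\<Sum>i\<in>UNIV. \<bar>d $ i\<bar>)" by (rule norm_le_l1_cart)
  also have "\<dots> = 1" using assms by (simp add: simplexM_def)
  finally show ?thesis .
qed

section \<open>Interpolation between pinpoints\<close>

locale pinpoint_interpolation =
  fixes C :: "nat \<Rightarrow> real ^ 'm \<Rightarrow> real"
    and Kp :: "nat \<Rightarrow> nat" and L :: nat
    and pp :: "nat \<Rightarrow> real" and dd :: "nat \<Rightarrow> real ^ 'm"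
    and eps_q eps_v plo phi :: real
    and pf :: "real \<Rightarrow> real" and df :: "real \<Rightarrow> real ^ 'm"
  assumes C_range: "\<And>j d. d \<in> simplexM \<Longrightarrow> 0 \<le> C j d \<and> C j d \<le> 1"
    and C_lip: "\<And>j. \<exists>B. B-lipschitz_on simplexM (C j)"
    and C_mono: "\<And>j d. d \<in> simplexM \<Longrightarrow> C j d \<ge> C (Suc j) d"
    and L_pos: "L \<ge> 1"
    and Kp_incr: "\<And>i. i < L \<Longrightarrow> Kp i < Kp (Suc i)"
    and pp_range: "\<And>i. i \<le> L \<Longrightarrow> 0 < pp i \<and> pp i < 1"
    and dd_simplex: "\<And>i. i \<le> L \<Longrightarrow> dd i \<in> simplexM"
    and eps_q_pos: "eps_q > 0"
    and qstar_pin_decrease: "\<And>i. 1 \<le> i \<Longrightarrow> i \<le> L \<Longrightarrow>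
         qstar_pin C Kp pp dd (i - 1) - qstar_pin C Kp pp dd i \<ge> eps_q"
    and J_below: "\<And>i l. 1 \<le> i \<Longrightarrow> i \<le> L \<Longrightarrow> 0 \<le> l \<Longrightarrow> l < 1 \<Longrightarrow>
         J_exists C eps_v (dil dd i l) \<and> Kil Kp i l > real (Jeps C eps_v (dil dd i l))"
    and eps_v_pos: "eps_v > 0"
    and plo_pos: "0 < plo" and phi_less_1: "phi < 1"
    and pp_bounds: "\<And>i. 1 \<le> i \<Longrightarrow> i \<le> L \<Longrightarrow> plo \<le> pp i \<and> pp i \<le> phi"
    and interp: "\<And>i l. 1 \<le> i \<Longrightarrow> i \<le> L \<Longrightarrow> 0 \<le> l \<Longrightarrow> l < 1 \<Longrightarrow>
         plo \<le> pf (Kil Kp i l) \<and> pf (Kil Kp i l) \<le> phi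
         \<and> qvr C (pf (Kil Kp i l)) (dil dd i l) (Kil Kp i l) = qil C Kp pp dd i l
         \<and> df (Kil Kp i l) = dil dd i l"
    and pf_last: "pf (real (Kp L)) = pp L" and df_last: "df (real (Kp L)) = dd L"
begin

definition qstar :: "real \<Rightarrow> real" where
  "qstar K = qvr C (pf K) (df K) K"

abbreviation q_pin :: "nat \<Rightarrow> real" where
  "q_pin \<equiv> qstar_pin C Kp pp dd"

lemma Kp_strict_mono:
  assumes "i < j" "j \<le> L"
  shows "Kp i < Kp j"
proof -
  have "{i..<j} \<subseteq> {..<L}" using assms by auto
  then show ?thesis using lift_Suc_mono_less_ivl[of "{..<L}" Kp i j] Kp_incr assms(1) by blast
qed

lemma segment_length:
  assumes "i < L"
  shows "1 \<le> real (Kp (Suc i)) - real (Kp i)"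
    and "real (Kp (Suc i)) - real (Kp i) \<le> real (Kp L) - real (Kp 0)"
proof -
  show "1 \<le> real (Kp (Suc i)) - real (Kp i)"
    using Kp_incr[OF assms] by linarith
  have "Kp (Suc i) \<le> Kp L" "Kp 0 \<le> Kp i"
    using Kp_strict_mono[of "Suc i" L] Kp_strict_mono[of 0 i] assms by (cases "Suc i = L"; fastforce)+
  then show "real (Kp (Suc i)) - real (Kp i) \<le> real (Kp L) - real (Kp 0)" by simp
qed

lemma q_pin_range: "i \<le> L \<Longrightarrow> 0 \<le> q_pin i \<and> q_pin i \<le> 1"
  unfolding qstar_pin_def using pp_range[of i] dd_simplex[of i]
  by (intro qvr_range C_range) auto

lemma segment_point:
  assumes "i < L" "real (Kp i) \<le> K" "K < real (Kp (Suc i))"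
  defines "l \<equiv> (K - real (Kp i)) / (real (Kp (Suc i)) - real (Kp i))"
  shows "0 \<le> l" "l < 1" "Kil Kp (Suc i) l = K"
proof -
  have D: "0 < real (Kp (Suc i)) - real (Kp i)" using segment_length(1)[OF assms(1)] by simp
  show "0 \<le> l" "l < 1" using assms D by (simp_all add: l_def divide_less_eq)
  have "Kil Kp (Suc i) l = real (Kp i) + l * (real (Kp (Suc i)) - real (Kp i))"
    by (simp add: Kil_def algebra_simps)
  also have "l * (real (Kp (Suc i)) - real (Kp i)) = K - real (Kp i)"
    using D by (simp add: l_def)
  finally show "Kil Kp (Suc i) l = K" by simp
qed

lemma at_pinpoint:
  assumes "i \<le> L"
  shows "df (real (Kp i)) = dd i" "qstar (real (Kp i)) = q_pin i"
proof -
  have "df (real (Kp i)) = dd i \<and> qstar (real (Kp i)) = q_pin i"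
  proof (cases "i < L")
    case True
    then show ?thesis
      using interp[of "Suc i" 0] by (simp add: Kil_def dil_def qil_def qstar_def)
  next
    case False
    then show ?thesis
      using assms pf_last df_last by (simp add: qstar_def qstar_pin_def)
  qed
  then show "df (real (Kp i)) = dd i" "qstar (real (Kp i)) = q_pin i" by simp_all
qed

lemma affine_on_segment:
  assumes "i < L" "real (Kp i) \<le> K" "K \<le> real (Kp (Suc i))"
  defines "s \<equiv> (K - real (Kp i)) / (real (Kp (Suc i)) - real (Kp i))"
  shows "df K = dd i + s *\<^sub>R (dd (Suc i) - dd i)"
    and "qstar K = q_pin i + s * (q_pin (Suc i) - q_pin i)"
proof -
  have "df K = dd i + s *\<^sub>R (dd (Suc i) - dd i) \<and> qstar K = q_pin i + s * (q_pin (Suc i) - q_pin i)"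
  proof (cases "K = real (Kp (Suc i))")
    case True
    then have "s = 1" using segment_length(1)[OF assms(1)] by (simp add: s_def)
    then show ?thesis using at_pinpoint[of "Suc i"] assms(1) True by simp
  next
    case False
    then have "0 \<le> s" "s < 1" "Kil Kp (Suc i) s = K"
      using segment_point[OF assms(1,2)] assms(3) unfolding s_def by simp_all
    then have "df K = dil dd (Suc i) s" "qstar K = qil C Kp pp dd (Suc i) s"
      using interp[of "Suc i" s] assms(1) by (simp_all add: qstar_def)
    then show ?thesis by (simp add: dil_def qil_def algebra_simps)
  qed
  then show "df K = dd i + s *\<^sub>R (dd (Suc i) - dd i)"
    and "qstar K = q_pin i + s * (q_pin (Suc i) - q_pin i)" by simp_all
qed

lemma increment_on_segment:
  assumes "i < L" "real (Kp i) \<le> a" "a \<le> b" "b \<le> real (Kp (Suc i))"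
  defines "w \<equiv> (b - a) / (real (Kp (Suc i)) - real (Kp i))"
  shows "df b - df a = w *\<^sub>R (dd (Suc i) - dd i)"
    and "qstar b - qstar a = w * (q_pin (Suc i) - q_pin i)"
proof -
  have w: "w = (b - real (Kp i)) / (real (Kp (Suc i)) - real (Kp i))
      - (a - real (Kp i)) / (real (Kp (Suc i)) - real (Kp i))"
    by (simp add: w_def diff_divide_distrib)
  show "df b - df a = w *\<^sub>R (dd (Suc i) - dd i)"
    using affine_on_segment(1)[OF assms(1,2)] affine_on_segment(1)[OF assms(1), of b] assms(2-4)
    unfolding w by (simp add: scaleR_diff_left)
  show "qstar b - qstar a = w * (q_pin (Suc i) - q_pin i)"
    using affine_on_segment(2)[OF assms(1,2)] affine_on_segment(2)[OF assms(1), of b] assms(2-4)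
    unfolding w by (simp add: left_diff_distrib)
qed

definition descent_rate :: real where
  "descent_rate = eps_q / (real (Kp L) - real (Kp 0))"

lemma descent_rate_pos: "0 < descent_rate"
  using Kp_strict_mono[of 0 L] L_pos eps_q_pos by (simp add: descent_rate_def)

lemma qstar_increment_bounds:
  assumes "real (Kp 0) \<le> a" "a \<le> b" "b \<le> real (Kp L)"
  shows "- (b - a) \<le> qstar b - qstar a \<and> qstar b - qstar a \<le> - descent_rate * (b - a)"
proof (rule partition_chain[where x = "\<lambda>i. real (Kp i)" and L = L and R = "\<lambda>a b.
    - (b - a) \<le> qstar b - qstar a \<and> qstar b - qstar a \<le> - descent_rate * (b - a)"])
  fix a b c :: real
  assume "a \<le> b" "b \<le> c"
    "- (b - a) \<le> qstar b - qstar a \<and> qstar b - qstar a \<le> - descent_rate * (b - a)"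
    "- (c - b) \<le> qstar c - qstar b \<and> qstar c - qstar b \<le> - descent_rate * (c - b)"
  then show "- (c - a) \<le> qstar c - qstar a \<and> qstar c - qstar a \<le> - descent_rate * (c - a)"
    by (simp add: algebra_simps)
next
  fix i a b
  assume segment: "i < L" "real (Kp i) \<le> a" "a \<le> b" "b \<le> real (Kp (Suc i))"
  define D where "D = real (Kp (Suc i)) - real (Kp i)"
  define g where "g = q_pin (Suc i) - q_pin i"
  have D: "1 \<le> D" "D \<le> real (Kp L) - real (Kp 0)"
    using segment_length[OF segment(1)] by (simp_all add: D_def)
  have g: "- 1 \<le> g" "g \<le> - eps_q"
    using q_pin_range[of i] q_pin_range[of "Suc i"] qstar_pin_decrease[of "Suc i"] segment(1)
    by (simp_all add: g_def)
  define w where "w = (b - a) / D"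
  have w: "0 \<le> w" "w \<le> b - a"
    using D segment(3) by (auto simp: w_def divide_le_eq mult_le_cancel_left1)
  have "descent_rate * (b - a) = eps_q * ((b - a) / (real (Kp L) - real (Kp 0)))"
    by (simp add: descent_rate_def)
  also have "\<dots> \<le> eps_q * w"
    using D segment(3) eps_q_pos unfolding w_def by (intro mult_left_mono divide_left_mono) auto
  finally have w_rate: "descent_rate * (b - a) \<le> eps_q * w" .
  have "qstar b - qstar a = w * g"
    using increment_on_segment(2)[OF segment] by (simp add: w_def D_def g_def)
  moreover have "- w \<le> w * g" "w * g \<le> - eps_q * w"
    using mult_left_mono[OF g(1) w(1)] mult_left_mono[OF g(2) w(1)] by (simp_all add: mult.commute)
  ultimately show "- (b - a) \<le> qstar b - qstar a \<and> qstar b - qstar a \<le> - descent_rate * (b - a)"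
    using w w_rate by linarith
qed (use assms in auto)

lemma df_increment_bound:
  assumes "real (Kp 0) \<le> a" "a \<le> b" "b \<le> real (Kp L)"
  shows "norm (df b - df a) \<le> 2 * (b - a)"
proof (rule partition_chain[where x = "\<lambda>i. real (Kp i)" and L = L
      and R = "\<lambda>a b. norm (df b - df a) \<le> 2 * (b - a)"])
  fix a b c :: real
  assume "norm (df b - df a) \<le> 2 * (b - a)" "norm (df c - df b) \<le> 2 * (c - b)"
  then show "norm (df c - df a) \<le> 2 * (c - a)"
    using norm_triangle_ineq[of "df c - df b" "df b - df a"] by simp
next
  fix i a b
  assume segment: "i < L" "real (Kp i) \<le> a" "a \<le> b" "b \<le> real (Kp (Suc i))"
  define w where "w = (b - a) / (real (Kp (Suc i)) - real (Kp i))"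
  have w: "0 \<le> w" "w \<le> b - a"
    using segment_length(1)[OF segment(1)] segment(3)
    by (auto simp: w_def divide_le_eq mult_le_cancel_left1)
  have "norm (dd (Suc i) - dd i) \<le> 2"
    using norm_triangle_ineq4[of "dd (Suc i)" "dd i"] simplexM_norm_le_1 dd_simplex segment(1)
    by (smt (verit) Suc_leI less_imp_le)
  then have "w * norm (dd (Suc i) - dd i) \<le> (b - a) * 2"
    using w by (intro mult_mono) auto
  moreover have "norm (df b - df a) = w * norm (dd (Suc i) - dd i)"
    using increment_on_segment(1)[OF segment] w(1) unfolding w_def[symmetric] by simp
  ultimately show "norm (df b - df a) \<le> 2 * (b - a)" by simp
qed (use assms in auto)

lemma qstar_abs_increment_ordered:
  assumes "real (Kp 0) \<le> a" "a \<le> b" "b \<le> real (Kp L)"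
  shows "descent_rate * \<bar>a - b\<bar> \<le> \<bar>qstar a - qstar b\<bar> \<and> \<bar>qstar a - qstar b\<bar> \<le> \<bar>a - b\<bar>"
proof -
  have "0 \<le> descent_rate * (b - a)" using descent_rate_pos assms(2) by simp
  moreover have "descent_rate * (b - a) \<le> qstar a - qstar b" "qstar a - qstar b \<le> b - a"
    using qstar_increment_bounds[OF assms] by linarith+
  ultimately show ?thesis using assms(2) by (simp add: abs_of_nonneg)
qed

lemma qstar_abs_increment:
  assumes "a \<in> {real (Kp 0)..real (Kp L)}" "b \<in> {real (Kp 0)..real (Kp L)}"
  shows "descent_rate * \<bar>a - b\<bar> \<le> \<bar>qstar a - qstar b\<bar>" "\<bar>qstar a - qstar b\<bar> \<le> \<bar>a - b\<bar>"
  using qstar_abs_increment_ordered[of a b] qstar_abs_increment_ordered[of b a] assms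
  by (cases "a \<le> b"; simp add: abs_minus_commute)+

lemma qstar_continuous: "continuous_on {real (Kp 0)..real (Kp L)} qstar"
proof (rule lipschitz_on_continuous_on)
  show "1-lipschitz_on {real (Kp 0)..real (Kp L)} qstar"
  proof (rule lipschitz_onI)
    fix a b assume "a \<in> {real (Kp 0)..real (Kp L)}" "b \<in> {real (Kp 0)..real (Kp L)}"
    then show "dist (qstar a) (qstar b) \<le> 1 * dist a b"
      using qstar_abs_increment(2) by (simp add: dist_real_def)
  qed simp
qed

lemma qstar_strict_antimono:
  assumes "real (Kp 0) \<le> a" "a < b" "b \<le> real (Kp L)"
  shows "qstar b < qstar a"
  using qstar_increment_bounds[of a b] mult_pos_pos[OF descent_rate_pos, of "b - a"] assms
  by linarith

lemma before_last_pinpoint: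
  assumes "real (Kp 0) \<le> K" "K < real (Kp L)"
  shows "plo \<le> pf K" "pf K \<le> phi" "df K \<in> simplexM"
    and "J_exists C eps_v (df K)" "real (Jeps C eps_v (df K)) < K"
proof -
  obtain i where i: "i < L" "real (Kp i) \<le> K" "K < real (Kp (Suc i))"
    using partition_segment_exists[of "\<lambda>i. real (Kp i)" K L] assms by blast
  define l where "l = (K - real (Kp i)) / (real (Kp (Suc i)) - real (Kp i))"
  have l: "0 \<le> l" "l < 1" "Kil Kp (Suc i) l = K"
    using segment_point[OF i] by (simp_all add: l_def)
  then have df_K: "df K = dil dd (Suc i) l"
    using interp[of "Suc i" l] i(1) by simp
  show "plo \<le> pf K" "pf K \<le> phi"
    using interp[of "Suc i" l] i(1) l by simp_all
  show "df K \<in> simplexM"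
    unfolding df_K dil_def using dd_simplex i(1) l by (intro simplexM_convex) auto
  show "J_exists C eps_v (df K)" "real (Jeps C eps_v (df K)) < K"
    using J_below[of "Suc i" l] i(1) l df_K by simp_all
qed

lemma on_pinpoint_range:
  assumes "real (Kp 0) \<le> K" "K \<le> real (Kp L)"
  shows "plo \<le> pf K" "pf K \<le> phi" "df K \<in> simplexM"
proof -
  have "plo \<le> pf K \<and> pf K \<le> phi \<and> df K \<in> simplexM"
  proof (cases "K = real (Kp L)")
    case True
    then show ?thesis using pf_last df_last pp_bounds[of L] dd_simplex[of L] L_pos by simp
  qed (use before_last_pinpoint assms in auto)
  then show "plo \<le> pf K" "pf K \<le> phi" "df K \<in> simplexM" by simp_all
qed

lemma C_uniform_lipschitz:
  obtains B where "0 \<le> B" "\<And>j. j \<le> Suc (Kp L) \<Longrightarrow> B-lipschitz_on simplexM (C j)"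
  by (metis uniform_lipschitz_on_initial_segment[where f = C and n = "Suc (Kp L)", OF C_lip])

lemma gap_above_floor:
  assumes "real (Kp 0) \<le> K" "K < real (Kp L)"
  shows "eps_v < C 0 (df K) - C (Suc (nat \<lfloor>K\<rfloor>)) (df K)"
proof (rule Jeps_gap)
  show "J_exists C eps_v (df K)" "\<And>j. C (Suc j) (df K) \<le> C j (df K)"
    using before_last_pinpoint[OF assms] C_mono by simp_all
  have "Jeps C eps_v (df K) \<le> nat \<lfloor>K\<rfloor>"
    using before_last_pinpoint(5)[OF assms] by (intro le_nat_floor) simp
  then show "Jeps C eps_v (df K) < Suc (nat \<lfloor>K\<rfloor>)" by simp
qed

text \<open>At the integer point \<open>n = \<lfloor>K\<rfloor>\<close> itself the gap exceeds \<open>eps_v\<close>; moving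
  from \<open>n\<close> to \<open>K\<close> changes the direction by at most \<open>2 frac K\<close>.\<close>
lemma gap_at_floor:
  assumes B: "\<And>j. j \<le> Suc (Kp L) \<Longrightarrow> B-lipschitz_on simplexM (C j)"
    and K: "real (Kp 0) \<le> K" "K < real (Kp L)"
  shows "eps_v - 4 * B * frac K \<le> C 0 (df K) - C (nat \<lfloor>K\<rfloor>) (df K)"
proof -
  define n where "n = nat \<lfloor>K\<rfloor>"
  have K_nonneg: "0 \<le> K" using K(1) by linarith
  have frac_K: "frac K = K - real n"
    using K_nonneg by (simp add: n_def frac_def)
  have "Kp 0 \<le> n" using K(1) unfolding n_def by (rule le_nat_floor)
  moreover have "real n \<le> K" using K_nonneg by (simp add: n_def)
  ultimately have n: "real (Kp 0) \<le> real n" "real n \<le> K" "real n < real (Kp L)"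
    using K(2) by simp_all
  have "Jeps C eps_v (df (real n)) < n"
    using before_last_pinpoint(5)[OF n(1,3)] by simp
  then have gap_n: "eps_v < C 0 (df (real n)) - C n (df (real n))"
    using Jeps_gap before_last_pinpoint(3,4)[OF n(1,3)] C_mono by blast
  have "norm (df K - df (real n)) \<le> 2 * frac K"
    using df_increment_bound[OF n(1,2)] K(2) by (simp add: frac_K)
  then have close: "B * norm (df K - df (real n)) \<le> 2 * B * frac K"
    using mult_left_mono lipschitz_on_nonneg[OF B[of 0]] by fastforce
  have "\<bar>C j (df K) - C j (df (real n))\<bar> \<le> B * norm (df K - df (real n))"
    if "j \<le> Suc (Kp L)" for j
    using lipschitz_onD[OF B[OF that] before_last_pinpoint(3)[OF K] before_last_pinpoint(3)[OF n(1,3)]]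
    by (simp add: dist_norm dist_real_def)
  from this[of 0] this[of n] have
    "\<bar>C 0 (df K) - C 0 (df (real n))\<bar> \<le> B * norm (df K - df (real n))"
    "\<bar>C n (df K) - C n (df (real n))\<bar> \<le> B * norm (df K - df (real n))"
    using n(3) by simp_all
  then show ?thesis using gap_n close unfolding n_def[symmetric] by linarith
qed

lemma interpolated_gap_lower_bound:
  assumes B: "0 \<le> B" "\<And>j. j \<le> Suc (Kp L) \<Longrightarrow> B-lipschitz_on simplexM (C j)"
    and tau: "tau \<le> 1/2" "4 * B * tau \<le> eps_v / 2"
    and K: "real (Kp 0) \<le> K" "K < real (Kp L)"
  shows "min (tau * eps_v) (eps_v / 4) \<le> lin_interp (\<lambda>j. C 0 (df K) - C j (df K)) K"
proof -
  define t where "t = frac K"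
  define g\<^sub>0 where "g\<^sub>0 = C 0 (df K) - C (nat \<lfloor>K\<rfloor>) (df K)"
  define g\<^sub>1 where "g\<^sub>1 = C 0 (df K) - C (Suc (nat \<lfloor>K\<rfloor>)) (df K)"
  have t: "0 \<le> t" "t < 1" by (simp_all add: t_def frac_lt_1)
  have g: "0 \<le> g\<^sub>0" "eps_v - 4 * B * t \<le> g\<^sub>0" "eps_v < g\<^sub>1"
    using lift_Suc_antimono_le[of "\<lambda>j. C j (df K)" 0] C_mono before_last_pinpoint(3)[OF K]
      gap_at_floor[OF B(2) K] gap_above_floor[OF K]
    by (auto simp: g\<^sub>0_def g\<^sub>1_def t_def)
  have lin: "lin_interp (\<lambda>j. C 0 (df K) - C j (df K)) K = (1 - t) * g\<^sub>0 + t * g\<^sub>1"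
    by (simp add: lin_interp_def t_def g\<^sub>0_def g\<^sub>1_def)
  show ?thesis
  proof (cases "tau \<le> t")
    case True
    have "min (tau * eps_v) (eps_v / 4) \<le> tau * eps_v" by simp
    also have "\<dots> \<le> t * g\<^sub>1" using True t(1) g(3) eps_v_pos by (intro mult_mono) auto
    finally show ?thesis using lin t g(1) by (simp add: add_increasing)
  next
    case False
    then have "eps_v / 2 \<le> g\<^sub>0"
      using g(2) tau(2) B(1) mult_left_mono[of t tau "4 * B"] by linarith
    then have "(1 - t) * (eps_v / 2) \<le> (1 - t) * g\<^sub>0" using t by (intro mult_left_mono) auto
    moreover have "eps_v * t \<le> eps_v * (1/2)"
      using False tau(1) eps_v_pos by (intro mult_left_mono) auto
    then have "eps_v / 4 \<le> (1 - t) * (eps_v / 2)" by (simp add: algebra_simps)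
    moreover have "0 \<le> t * g\<^sub>1" using t g(3) eps_v_pos by simp
    ultimately show ?thesis using lin by simp
  qed
qed

lemma gap_lower_bound:
  obtains h where "0 < h"
    "\<And>K. real (Kp 0) \<le> K \<Longrightarrow> K < real (Kp L) \<Longrightarrow> h \<le> lin_interp (\<lambda>j. C 0 (df K) - C j (df K)) K"
proof -
  obtain B where B: "0 \<le> B" "\<And>j. j \<le> Suc (Kp L) \<Longrightarrow> B-lipschitz_on simplexM (C j)"
    using C_uniform_lipschitz by blast
  define tau where "tau = min (1/2) (eps_v / (8 * B + 1))"
  have "B * tau \<le> B * (eps_v / (8 * B + 1))" using B(1) by (intro mult_left_mono) (auto simp: tau_def)
  also have "\<dots> \<le> eps_v / 8" using B(1) eps_v_pos by (simp add: divide_simps)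
  finally have "4 * B * tau \<le> eps_v / 2" by linarith
  moreover have "tau \<le> 1/2" unfolding tau_def by (rule min.cobounded1)
  moreover have "0 < tau" using eps_v_pos B(1) by (simp add: tau_def)
  ultimately show ?thesis
    using that[of "min (tau * eps_v) (eps_v / 4)"] interpolated_gap_lower_bound[OF B] eps_v_pos
    by simp
qed

lemma pf_diff_le_qvr_diff:
  assumes gap: "h \<le> lin_interp (\<lambda>j. C 0 (df a) - C j (df a)) a"
    and a: "real (Kp 0) \<le> a" "a < real (Kp L)" and p: "plo \<le> p" "p \<le> phi"
  shows "min plo (1 - phi) ^ Suc (Kp L) * h * \<bar>pf a - p\<bar> \<le> \<bar>qstar a - qvr C p (df a) a\<bar>"
proof -
  define m where "m = min plo (1 - phi)"
  define c where "c = m ^ Suc (Kp L)"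
  have "Suc (nat \<lfloor>a\<rfloor>) \<le> Suc (Kp L)"
    using a(2) by (metis Suc_le_mono floor_mono floor_of_nat less_imp_le nat_int nat_mono)
  have "(p\<^sub>2 - p\<^sub>1) * c * h \<le> qvr C p\<^sub>1 (df a) a - qvr C p\<^sub>2 (df a) a"
    if "plo \<le> p\<^sub>1" "p\<^sub>1 \<le> p\<^sub>2" "p\<^sub>2 \<le> phi" for p\<^sub>1 p\<^sub>2
  proof -
    have m: "0 \<le> m" "m \<le> p\<^sub>1" "p\<^sub>2 \<le> 1 - m" using that plo_pos phi_less_1 by (auto simp: m_def)
    have "(p\<^sub>2 - p\<^sub>1) * c * h \<le> (p\<^sub>2 - p\<^sub>1) * c * lin_interp (\<lambda>j. C 0 (df a) - C j (df a)) a"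
      using gap m that by (intro mult_left_mono) (auto simp: c_def)
    also have "\<dots> \<le> qvr C p\<^sub>1 (df a) a - qvr C p\<^sub>2 (df a) a"
      unfolding c_def using qvr_gap m that C_mono before_last_pinpoint(3)[OF a]
        \<open>Suc (nat \<lfloor>a\<rfloor>) \<le> Suc (Kp L)\<close>
      by blast
    finally show ?thesis .
  qed
  from this[of "pf a" p] this[of p "pf a"] show ?thesis
    using before_last_pinpoint(1,2)[OF a] p unfolding c_def m_def qstar_def
    by (cases "pf a \<le> p") (simp_all add: abs_if algebra_simps)
qed

lemma qstar_minus_qvr_at_pf_bound:
  assumes B: "0 \<le> B" "\<And>j. j \<le> Suc (Kp L) \<Longrightarrow> B-lipschitz_on simplexM (C j)"
    and ab: "real (Kp 0) \<le> a" "a \<le> b" "b \<le> real (Kp L)"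
  shows "\<bar>qstar a - qvr C (pf b) (df a) a\<bar> \<le> (2 * B + 2) * (b - a)"
proof -
  have pf_b: "0 \<le> pf b" "pf b \<le> 1"
    using on_pinpoint_range(1,2)[of b] ab plo_pos phi_less_1 by simp_all
  have simplex: "df a \<in> simplexM" "df b \<in> simplexM"
    using on_pinpoint_range(3) ab by simp_all
  have "\<bar>qstar a - qstar b\<bar> \<le> b - a"
    using qstar_abs_increment(2)[of a b] ab by simp
  moreover have "\<bar>qvr C (pf b) (df b) b - qvr C (pf b) (df a) b\<bar> \<le> B * norm (df b - df a)"
  proof (rule qvr_lipschitz_d[OF pf_b _ simplex(2,1)])
    have "nat \<lfloor>b\<rfloor> \<le> Kp L" using ab(3) by (metis floor_mono floor_of_nat nat_int nat_mono)
    then show "B-lipschitz_on simplexM (C j)" if "j \<le> Suc (nat \<lfloor>b\<rfloor>)" for j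
      using B(2) that by simp
  qed
  moreover have "B * norm (df b - df a) \<le> B * (2 * (b - a))"
    using df_increment_bound[OF ab] B(1) by (intro mult_left_mono)
  moreover have "\<bar>qvr C (pf b) (df a) b - qvr C (pf b) (df a) a\<bar> \<le> b - a"
    using qvr_lipschitz_K[of C "df a", OF C_range[OF simplex(1)] pf_b] ab by simp
  ultimately show ?thesis unfolding qstar_def abs_le_iff by (simp add: algebra_simps)
qed

lemma pf_lipschitz:
  obtains P where "0 \<le> P"
    "\<And>a b. real (Kp 0) \<le> a \<Longrightarrow> a \<le> b \<Longrightarrow> b \<le> real (Kp L) \<Longrightarrow> \<bar>pf a - pf b\<bar> \<le> P * (b - a)"
proof -
  obtain B where B: "0 \<le> B" "\<And>j. j \<le> Suc (Kp L) \<Longrightarrow> B-lipschitz_on simplexM (C j)"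
    using C_uniform_lipschitz by blast
  obtain h where h: "0 < h"
    "\<And>K. real (Kp 0) \<le> K \<Longrightarrow> K < real (Kp L) \<Longrightarrow> h \<le> lin_interp (\<lambda>j. C 0 (df K) - C j (df K)) K"
    using gap_lower_bound by blast
  define c where "c = min plo (1 - phi) ^ Suc (Kp L) * h"
  have c: "0 < c" using h(1) plo_pos phi_less_1 by (simp add: c_def)
  have "\<bar>pf a - pf b\<bar> \<le> (2 * B + 2) / c * (b - a)"
    if ab: "real (Kp 0) \<le> a" "a \<le> b" "b \<le> real (Kp L)" for a b
  proof (cases "a = b")
    case False
    then have a: "real (Kp 0) \<le> a" "a < real (Kp L)" using ab by simp_all
    have "c * \<bar>pf a - pf b\<bar> \<le> \<bar>qstar a - qvr C (pf b) (df a) a\<bar>"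
      unfolding c_def using pf_diff_le_qvr_diff[OF h(2)[OF a] a] on_pinpoint_range(1,2)[of b] ab by simp
    also have "\<dots> \<le> (2 * B + 2) * (b - a)"
      using qstar_minus_qvr_at_pf_bound[OF B ab] .
    finally show ?thesis using c by (simp add: field_simps)
  qed simp
  moreover have "0 \<le> (2 * B + 2) / c" using B(1) c by simp
  ultimately show ?thesis using that by blast
qed

lemma transmission_vector_lipschitz:
  "\<exists>Kg>0. \<forall>a\<in>{real (Kp 0)..real (Kp L)}. \<forall>b\<in>{real (Kp 0)..real (Kp L)}.
     norm (pf a *\<^sub>R df a - pf b *\<^sub>R df b) \<le> Kg * \<bar>a - b\<bar>"
proof -
  obtain P where P: "0 \<le> P"
    "\<And>a b. real (Kp 0) \<le> a \<Longrightarrow> a \<le> b \<Longrightarrow> b \<le> real (Kp L) \<Longrightarrow> \<bar>pf a - pf b\<bar> \<le> P * (b - a)"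
    using pf_lipschitz by blast
  have ordered: "norm (pf a *\<^sub>R df a - pf b *\<^sub>R df b) \<le> (P + 2) * (b - a)"
    if ab: "real (Kp 0) \<le> a" "a \<le> b" "b \<le> real (Kp L)" for a b
  proof -
    have "pf a *\<^sub>R df a - pf b *\<^sub>R df b = (pf a - pf b) *\<^sub>R df a + pf b *\<^sub>R (df a - df b)"
      by (simp add: algebra_simps)
    then have "norm (pf a *\<^sub>R df a - pf b *\<^sub>R df b)
        \<le> \<bar>pf a - pf b\<bar> * norm (df a) + \<bar>pf b\<bar> * norm (df a - df b)"
      by (metis norm_scaleR norm_triangle_ineq)
    also have "\<dots> \<le> P * (b - a) * 1 + 1 * (2 * (b - a))"
      using P(2)[OF ab] df_increment_bound[OF ab] on_pinpoint_range[of a] on_pinpoint_range[of b]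
        simplexM_norm_le_1 ab plo_pos phi_less_1 P(1)
      by (intro add_mono mult_mono) (auto simp: norm_minus_commute)
    finally show ?thesis by (simp add: algebra_simps)
  qed
  have "norm (pf a *\<^sub>R df a - pf b *\<^sub>R df b) \<le> (P + 2) * \<bar>a - b\<bar>"
    if "a \<in> {real (Kp 0)..real (Kp L)}" "b \<in> {real (Kp 0)..real (Kp L)}" for a b
    using ordered[of a b] ordered[of b a] that
    by (cases "a \<le> b") (simp_all add: norm_minus_commute)
  then show ?thesis using P(1) by (intro exI[of _ "P + 2"]) auto
qed

end

theorem theorem7:
  fixes C :: "nat \<Rightarrow> real ^ 'm \<Rightarrow> real"
    and Kp :: "nat \<Rightarrow> nat" and L :: nat
    and pp :: "nat \<Rightarrow> real" and dd :: "nat \<Rightarrow> real ^ 'm"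
    and eps_q eps_v plo phi :: real
    and pf :: "real \<Rightarrow> real" and df :: "real \<Rightarrow> real ^ 'm"
  assumes C_range: "\<And>j d. d \<in> simplexM \<Longrightarrow> 0 \<le> C j d \<and> C j d \<le> 1"
    and C_lip: "\<And>j. \<exists>B. B-lipschitz_on simplexM (C j)"
    and C_mono: "\<And>j d. d \<in> simplexM \<Longrightarrow> C j d \<ge> C (Suc j) d"
    and L_pos: "L \<ge> 1"
    and Kp_incr: "\<And>i. i < L \<Longrightarrow> Kp i < Kp (Suc i)"
    and pp_range: "\<And>i. i \<le> L \<Longrightarrow> 0 < pp i \<and> pp i < 1"
    and dd_simplex: "\<And>i. i \<le> L \<Longrightarrow> dd i \<in> simplexM"
    and cond1: "eps_q > 0"
      "\<And>i. 1 \<le> i \<Longrightarrow> i \<le> L \<Longrightarrow>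
         qstar_pin C Kp pp dd (i - 1) - qstar_pin C Kp pp dd i \<ge> eps_q"
    and cond2: "eps_v > 0"
      "\<And>i l. 1 \<le> i \<Longrightarrow> i \<le> L \<Longrightarrow> 0 \<le> l \<Longrightarrow> l < 1 \<Longrightarrow>
         J_exists C eps_v (dil dd i l) \<and> Kil Kp i l > real (Jeps C eps_v (dil dd i l))"
    and cond3: "0 < plo" "plo < phi" "phi < 1"
      "\<And>i. 1 \<le> i \<Longrightarrow> i \<le> L \<Longrightarrow> plo \<le> pp i \<and> pp i \<le> phi"
    and cond4: "\<And>i l. 1 \<le> i \<Longrightarrow> i \<le> L \<Longrightarrow> 0 \<le> l \<Longrightarrow> l < 1 \<Longrightarrow>
         qvr C phi (dil dd i l) (Kil Kp i l) \<le> qil C Kp pp dd i l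
         \<and> qil C Kp pp dd i l \<le> qvr C plo (dil dd i l) (Kil Kp i l)"
    and interp: "\<And>i l. 1 \<le> i \<Longrightarrow> i \<le> L \<Longrightarrow> 0 \<le> l \<Longrightarrow> l < 1 \<Longrightarrow>
         plo \<le> pf (Kil Kp i l) \<and> pf (Kil Kp i l) \<le> phi
         \<and> qvr C (pf (Kil Kp i l)) (dil dd i l) (Kil Kp i l) = qil C Kp pp dd i l
         \<and> df (Kil Kp i l) = dil dd i l"
    and endpt: "pf (real (Kp L)) = pp L" "df (real (Kp L)) = dd L"
  shows
    "(\<exists>Kg>0. \<forall>a\<in>{real (Kp 0)..real (Kp L)}. \<forall>b\<in>{real (Kp 0)..real (Kp L)}.
        norm (pf a *\<^sub>R df a - pf b *\<^sub>R df b) \<le> Kg * \<bar>a - b\<bar>)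
   \<and> continuous_on {real (Kp 0)..real (Kp L)} (\<lambda>K. qvr C (pf K) (df K) K)
   \<and> (\<forall>a\<in>{real (Kp 0)..real (Kp L)}. \<forall>b\<in>{real (Kp 0)..real (Kp L)}.
        a < b \<longrightarrow> qvr C (pf b) (df b) b < qvr C (pf a) (df a) a)
   \<and> (\<exists>e'>0. \<forall>a\<in>{real (Kp 0)..real (Kp L)}. \<forall>b\<in>{real (Kp 0)..real (Kp L)}.
        \<bar>qvr C (pf a) (df a) a - qvr C (pf b) (df b) b\<bar> \<ge> e' * \<bar>a - b\<bar>)
   \<and> (\<forall>K\<in>{real (Kp 0)..<real (Kp L)}.
        J_exists C eps_v (df K) \<and> K > real (Jeps C eps_v (df K)))
   \<and> (\<forall>K\<in>{real (Kp 0)..real (Kp L)}. plo \<le> pf K \<and> pf K \<le> phi)"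
proof -
  interpret pinpoint_interpolation C Kp L pp dd eps_q eps_v plo phi pf df
    \<comment> \<open>Condition (4) only guarantees that the interpolated \<open>pf\<close> exists.\<close>
    using C_range C_lip C_mono L_pos Kp_incr pp_range dd_simplex cond1 cond2 cond3 interp endpt
    by unfold_locales auto
  show ?thesis
    unfolding qstar_def[symmetric]
  proof (intro conjI)
    show "\<exists>e'>0. \<forall>a\<in>{real (Kp 0)..real (Kp L)}. \<forall>b\<in>{real (Kp 0)..real (Kp L)}.
        e' * \<bar>a - b\<bar> \<le> \<bar>qstar a - qstar b\<bar>"
      using descent_rate_pos qstar_abs_increment(1) by blast
  qed (use transmission_vector_lipschitz qstar_continuous qstar_strict_antimono
      before_last_pinpoint on_pinpoint_range in auto)
qed

end
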